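(* For every integer $n\ge1$, $$\sum_{k=1}^n\frac{(-1)^k}{k^2\binom{2n}{k}}=H_{2n}^{(2)}+\frac32\sum_{k=1}^{n}\frac{(-1)^k}{k^2\binom{2k}{k}}-2\sum_{k=1}^{n}\frac{(-1)^k}{k\binom{2k}{k}}+4\sum_{k=1}^{n}\frac{(-1)^k}{(2k-1)\binom{2k}{k}}.$$
   Context: $H_m^{(2)}=\sum_{j=1}^m 1/j^2$. *)

theory Defs
  imports Complex_Main
begin

definition H2 :: "nat \<Rightarrow> real" where
  "H2 m = (\<Sum>j=1..m. 1 / (real j)^2)"

end

theory Submission
  imports Defs
begin

text \<open>
  Write \<open>T\<^sub>n(g) = \<Sum>\<^sub>k\<^sub>=\<^sub>1\<^sup>n (-1)\<^sup>k g(k) / C(2n,k)\<close>. Since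
  \<open>C(2n,k) / C(2n+2,k) = (k\<^sup>2 - (4n+3)k + (2n+1)(2n+2)) / ((2n+1)(2n+2))\<close>, passing from
  \<open>n\<close> to \<open>n+1\<close> expresses \<open>T\<^sub>n\<^sub>+\<^sub>1(g)\<close> through \<open>T\<^sub>n(g)\<close>, \<open>T\<^sub>n(k g)\<close> and
  \<open>T\<^sub>n(k\<^sup>2 g)\<close>. The weights \<open>1\<close> and \<open>k\<close> have closed forms, because
  \<open>1/C(N,k) = (N+1)/(N+2) (1/C(N+1,k) + 1/C(N+1,k+1))\<close> makes the alternating sums
  telescope. Then \<open>T\<^sub>n(1/k)\<close> and finally \<open>T\<^sub>n(1/k\<^sup>2)\<close> follow by induction on \<open>n\<close>,
  the latter because both sides of the identity satisfy the same recurrence.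
\<close>

lemma real_binomial_Suc_upper:
  assumes "k \<le> N"
  shows "real (Suc N choose k) = (real N + 1) / (real N + 1 - real k) * real (N choose k)"
  using of_nat_binomial_eq_mult_binomial_Suc[OF assms, where 'a=real] assms
  by (simp add: of_nat_diff field_simps)

lemma real_binomial_Suc_Suc:
  "real (Suc N choose Suc k) = (real N + 1) / (real k + 1) * real (N choose k)"
  using Suc_times_binomial[of k N] by (simp add: field_simps flip: of_nat_mult)

lemma inverse_binomial_telescope:
  assumes "k \<le> N"
  shows "1 / real (N choose k)
    = (real N + 1) / (real N + 2) * (1 / real (Suc N choose k) + 1 / real (Suc N choose Suc k))"
proof -
  have c: "real (N choose k) > 0" and "real N + 1 - real k > 0" using assms by auto
  then have "1 / real (Suc N choose k) + 1 / real (Suc N choose Suc k)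
      = (real N + 1 - real k) / ((real N + 1) * real (N choose k))
        + (real k + 1) / ((real N + 1) * real (N choose k))"
    unfolding real_binomial_Suc_upper[OF assms] real_binomial_Suc_Suc by simp
  also have "\<dots> = (real N + 2) / ((real N + 1) * real (N choose k))"
    by (simp add: add_divide_distrib[symmetric])
  finally show ?thesis using c by simp
qed

lemma alternating_telescope:
  fixes a :: "nat \<Rightarrow> real"
  shows "(\<Sum>k=0..m. (-1)^k * (a k + a (Suc k))) = a 0 + (-1)^m * a (Suc m)"
  by (induction m) (simp_all add: algebra_simps)

lemma alternating_telescope_weighted:
  fixes a :: "nat \<Rightarrow> real"
  shows "(\<Sum>k=0..m. (-1)^k * real k * (a k + a (Suc k)))
    = (-1)^m * real m * a (Suc m) + (\<Sum>k=1..m. (-1)^k * a k)"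
  by (induction m) (simp_all add: algebra_simps)

lemma alternating_inverse_binomial_sum_expand:
  assumes "m \<le> N"
  shows "(\<Sum>k=0..m. (-1)^k * w k / real (N choose k))
    = (real N + 1) / (real N + 2)
      * (\<Sum>k=0..m. (-1)^k * w k * (1 / real (Suc N choose k) + 1 / real (Suc N choose Suc k)))"
  unfolding sum_distrib_left
proof (rule sum.cong[OF refl])
  fix k assume "k \<in> {0..m}"
  then have "k \<le> N" using assms by simp
  have "(-1)^k * w k / real (N choose k) = (-1)^k * w k * (1 / real (N choose k))" by simp
  also have "\<dots> = (real N + 1) / (real N + 2)
      * ((-1)^k * w k * (1 / real (Suc N choose k) + 1 / real (Suc N choose Suc k)))"
    unfolding inverse_binomial_telescope[OF \<open>k \<le> N\<close>] by (rule mult.left_commute)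
  finally show "(-1)^k * w k / real (N choose k) = (real N + 1) / (real N + 2)
      * ((-1)^k * w k * (1 / real (Suc N choose k) + 1 / real (Suc N choose Suc k)))" .
qed

lemma alternating_inverse_binomial_sum:
  assumes "m \<le> N"
  shows "(\<Sum>k=0..m. (-1)^k / real (N choose k))
    = (real N + 1) / (real N + 2) * (1 + (-1)^m / real (Suc N choose Suc m))"
  using alternating_inverse_binomial_sum_expand[OF assms, of "\<lambda>_. 1"]
    alternating_telescope[of "\<lambda>k. 1 / real (Suc N choose k)" m]
  by (simp del: binomial_Suc_Suc)

lemma alternating_inverse_binomial_sum_weighted:
  assumes "m \<le> N"
  shows "(\<Sum>k=0..m. (-1)^k * real k / real (N choose k))
    = (real N + 1) / (real N + 2)
      * ((-1)^m * real m / real (Suc N choose Suc m) + (\<Sum>k=1..m. (-1)^k / real (Suc N choose k)))"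
  using alternating_inverse_binomial_sum_expand[OF assms, of real]
    alternating_telescope_weighted[of "\<lambda>k. 1 / real (Suc N choose k)" m]
  by (simp del: binomial_Suc_Suc)

lemma inverse_binomial_Suc_Suc_upper:
  assumes "k \<le> N"
  shows "1 / real (Suc (Suc N) choose k)
    = (real N + 2 - real k) * (real N + 1 - real k) / ((real N + 1) * (real N + 2) * real (N choose k))"
  using assms by (simp add: real_binomial_Suc_upper field_simps)

lemma central_binomial_Suc:
  "real ((2 * Suc n) choose Suc n) = 2 * (2 * real n + 1) / (real n + 1) * real ((2 * n) choose n)"
proof -
  have "real (Suc (Suc (2 * n)) choose Suc n) = (2 * real n + 2) / (real n + 1) * real (Suc (2 * n) choose Suc n)"
    by (subst real_binomial_Suc_upper) (simp_all add: algebra_simps del: binomial_Suc_Suc)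
  also have "\<dots> = 2 * (2 * real n + 1) / (real n + 1) * real ((2 * n) choose n)"
    using real_binomial_Suc_Suc[of "2 * n" n] by (simp add: field_simps del: binomial_Suc_Suc)
  finally show ?thesis by simp
qed

lemma inverse_binomial_double_Suc:
  assumes "k \<le> 2 * n"
  shows "1 / real ((2 * Suc n) choose k)
    = (1 + (real k^2 - (4 * real n + 3) * real k) / ((2 * real n + 1) * (2 * real n + 2)))
      / real ((2 * n) choose k)"
proof -
  have "2 * Suc n = Suc (Suc (2 * n))" by simp
  then have "1 / real ((2 * Suc n) choose k)
      = (2 * real n + 2 - real k) * (2 * real n + 1 - real k)
        / ((2 * real n + 1) * (2 * real n + 2) * real ((2 * n) choose k))"
    using inverse_binomial_Suc_Suc_upper[OF assms] by (simp del: binomial_Suc_Suc)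
  also have "\<dots> = (1 + (real k^2 - (4 * real n + 3) * real k) / ((2 * real n + 1) * (2 * real n + 2)))
      / real ((2 * n) choose k)"
  proof -
    \<comment> \<open>denominators as opaque variables, so that \<open>field_simps\<close> can clear them\<close>
    have expand: "(Q - K) * (P - K) / (P * Q * c) = (1 + (K^2 - a * K) / (P * Q)) / c"
      if "P + Q = a" "P \<noteq> 0" "Q \<noteq> 0" "c \<noteq> 0" for P Q K a c :: real
      using that(2-) by (simp add: field_simps) (simp add: that(1)[symmetric] algebra_simps power2_eq_square)
    have "real ((2 * n) choose k) \<noteq> 0" using assms by simp
    then show ?thesis by (simp add: expand[of "2 * real n + 1" "2 * real n + 2" "4 * real n + 3"])
  qed
  finally show ?thesis .
qed

definition alternating_binomial_sum :: "(real \<Rightarrow> real) \<Rightarrow> nat \<Rightarrow> real" where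
  "alternating_binomial_sum g n = (\<Sum>k=1..n. (-1)^k * g (real k) / real ((2 * n) choose k))"

lemma alternating_binomial_sum_cong:
  assumes "\<And>x. x \<ge> 1 \<Longrightarrow> g x = h x"
  shows "alternating_binomial_sum g n = alternating_binomial_sum h n"
  unfolding alternating_binomial_sum_def using assms by (intro sum.cong) auto

lemma alternating_binomial_term_Suc:
  assumes "k \<le> 2 * n"
  shows "(-1)^k * y / real ((2 * Suc n) choose k)
    = (-1)^k * y / real ((2 * n) choose k)
      + ((-1)^k * (real k^2 * y) / real ((2 * n) choose k)
         - (4 * real n + 3) * ((-1)^k * (real k * y) / real ((2 * n) choose k)))
        / ((2 * real n + 1) * (2 * real n + 2))"
proof -
  have distrib: "s * y * ((1 + (x^2 - a * x) / D) / c)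
      = s * y / c + (s * (x^2 * y) / c - a * (s * (x * y) / c)) / D"
    if "D \<noteq> 0" "c \<noteq> 0" for D c s y a x :: real
    using that by (simp add: field_simps)
  have "real ((2 * n) choose k) \<noteq> 0" "(2 * real n + 1) * (2 * real n + 2) \<noteq> 0"
    using assms by auto
  moreover have "(-1)^k * y / real ((2 * Suc n) choose k)
      = (-1)^k * y * ((1 + (real k^2 - (4 * real n + 3) * real k) / ((2 * real n + 1) * (2 * real n + 2)))
        / real ((2 * n) choose k))"
    using inverse_binomial_double_Suc[OF assms] by (metis times_divide_eq_right mult_1_right)
  ultimately show ?thesis using distrib by simp
qed

lemma alternating_binomial_sum_Suc:
  "alternating_binomial_sum g (Suc n)
    = alternating_binomial_sum g n
      + (alternating_binomial_sum (\<lambda>x. x^2 * g x) n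
         - (4 * real n + 3) * alternating_binomial_sum (\<lambda>x. x * g x) n)
        / ((2 * real n + 1) * (2 * real n + 2))
      + (-1)^Suc n * g (real n + 1) / real ((2 * Suc n) choose Suc n)"
proof -
  let ?D = "(2 * real n + 1) * (2 * real n + 2)"
  have "(\<Sum>k=1..n. (-1)^k * g (real k) / real ((2 * Suc n) choose k))
      = (\<Sum>k=1..n. (-1)^k * g (real k) / real ((2 * n) choose k)
        + ((-1)^k * (real k^2 * g (real k)) / real ((2 * n) choose k)
           - (4 * real n + 3) * ((-1)^k * (real k * g (real k)) / real ((2 * n) choose k))) / ?D)"
    by (intro sum.cong refl alternating_binomial_term_Suc) simp
  also have "\<dots> = alternating_binomial_sum g n
        + (alternating_binomial_sum (\<lambda>x. x^2 * g x) n
           - (4 * real n + 3) * alternating_binomial_sum (\<lambda>x. x * g x) n) / ?D"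
    unfolding alternating_binomial_sum_def
    by (simp only: sum.distrib sum_divide_distrib[symmetric] sum_subtractf sum_distrib_left[symmetric])
  finally show ?thesis
    by (simp add: alternating_binomial_sum_def [of g "Suc n"] add_ac del: binomial_Suc_Suc mult_Suc_right)
qed

lemma alternating_binomial_sum_const:
  "alternating_binomial_sum (\<lambda>_. 1) n
    = -1 / (2 * real n + 2) + (-1)^n / (2 * real ((2 * n) choose n))"
proof -
  define c where "c = real ((2 * n) choose n)"
  have "c > 0" by (simp add: c_def)
  have "1 + alternating_binomial_sum (\<lambda>_. 1) n = (\<Sum>k=0..n. (-1)^k / real ((2 * n) choose k))"
    unfolding alternating_binomial_sum_def by (simp add: sum.atLeast_Suc_atMost)
  also have "\<dots> = (2 * real n + 1) / (2 * real n + 2) * (1 + (-1)^n * (real n + 1) / ((2 * real n + 1) * c))"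
    using alternating_inverse_binomial_sum[of n "2 * n"] real_binomial_Suc_Suc[of "2 * n" n]
    by (simp add: c_def add.assoc del: binomial_Suc_Suc)
  finally have "alternating_binomial_sum (\<lambda>_. 1) n
      = (2 * real n + 1) / (2 * real n + 2) * (1 + (-1)^n * (real n + 1) / ((2 * real n + 1) * c)) - 1"
    by simp
  also have "\<dots> = -1 / (2 * real n + 2) + (-1)^n / (2 * c)"
  proof -
    have "u / v * (1 + s * (N + 1) / (u * c)) - 1 = -1 / v + s / (2 * c)"
      if "u = 2 * N + 1" "v = 2 * N + 2" "u \<noteq> 0" "v \<noteq> 0" "c \<noteq> 0" for u v N s c :: real
      using that(3-) by (simp add: field_simps) (simp add: that(1,2) algebra_simps)
    then show ?thesis by (rule; use \<open>c > 0\<close> in simp)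
  qed
  finally show ?thesis unfolding c_def .
qed

lemma alternating_binomial_sum_id:
  "alternating_binomial_sum (\<lambda>x. x) n
    = (-1)^n * (2 * real n^2 + 4 * real n + 1) / (2 * (2 * real n + 3) * real ((2 * n) choose n))
      - (2 * real n + 1) / ((2 * real n + 2) * (2 * real n + 3))"
proof -
  define c where "c = real ((2 * n) choose n)"
  have "c > 0" by (simp add: c_def)
  have "(\<Sum>k=1..n. (-1)^k / real (Suc (2 * n) choose k))
      = (\<Sum>k=0..n. (-1)^k / real (Suc (2 * n) choose k)) - 1"
    by (simp add: sum.atLeast_Suc_atMost)
  also have "\<dots> = (2 * real n + 2) / (2 * real n + 3) * (1 + (-1)^n * (real n + 1) / (2 * (2 * real n + 1) * c)) - 1"
    using alternating_inverse_binomial_sum[of n "Suc (2 * n)"] central_binomial_Suc[of n]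
    by (simp add: c_def add_ac del: binomial_Suc_Suc)
  finally have odd_sum: "(\<Sum>k=1..n. (-1)^k / real (Suc (2 * n) choose k))
      = (2 * real n + 2) / (2 * real n + 3) * (1 + (-1)^n * (real n + 1) / (2 * (2 * real n + 1) * c)) - 1" .
  have "alternating_binomial_sum (\<lambda>x. x) n = (\<Sum>k=0..n. (-1)^k * real k / real ((2 * n) choose k))"
    unfolding alternating_binomial_sum_def by (simp add: sum.atLeast_Suc_atMost)
  also have "\<dots> = (2 * real n + 1) / (2 * real n + 2)
      * ((-1)^n * real n * (real n + 1) / ((2 * real n + 1) * c)
         + ((2 * real n + 2) / (2 * real n + 3) * (1 + (-1)^n * (real n + 1) / (2 * (2 * real n + 1) * c)) - 1))"
    using alternating_inverse_binomial_sum_weighted[of n "2 * n"] real_binomial_Suc_Suc[of "2 * n" n]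
    unfolding odd_sum by (simp add: c_def add.assoc del: binomial_Suc_Suc)
  also have "\<dots> = (-1)^n * (2 * real n^2 + 4 * real n + 1) / (2 * (2 * real n + 3) * c)
      - (2 * real n + 1) / ((2 * real n + 2) * (2 * real n + 3))"
  proof -
    have "u / v * (s * N * (N + 1) / (u * c) + (v / w * (1 + s * (N + 1) / (2 * u * c)) - 1))
        = s * (2 * N^2 + 4 * N + 1) / (2 * w * c) - u / (v * w)"
      if "u = 2 * N + 1" "v = 2 * N + 2" "w = 2 * N + 3" "u \<noteq> 0" "v \<noteq> 0" "w \<noteq> 0" "c \<noteq> 0"
      for u v w N s c :: real
      using that(4-) by (simp add: field_simps) (simp add: that(1-3) algebra_simps power2_eq_square)
    then show ?thesis by (rule; use \<open>c > 0\<close> in simp)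
  qed
  finally show ?thesis unfolding c_def .
qed

lemma alternating_binomial_sum_inverse:
  "alternating_binomial_sum (\<lambda>x. 1 / x) n
    = -1 / (2 * real n + 1) + (-1)^n / ((2 * real n + 1) * real ((2 * n) choose n))"
proof (induction n)
  case 0
  show ?case by (simp add: alternating_binomial_sum_def)
next
  case (Suc n)
  define c where "c = real ((2 * n) choose n)"
  have "c > 0" by (simp add: c_def)
  have "alternating_binomial_sum (\<lambda>x. x^2 * (1 / x)) n = alternating_binomial_sum (\<lambda>x. x) n"
    by (rule alternating_binomial_sum_cong) (simp add: power2_eq_square)
  moreover have "alternating_binomial_sum (\<lambda>x. x * (1 / x)) n = alternating_binomial_sum (\<lambda>_. 1) n"
    by (rule alternating_binomial_sum_cong) simp
  ultimately have "alternating_binomial_sum (\<lambda>x. 1 / x) (Suc n)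
      = -1 / (2 * real n + 1) + (-1)^n / ((2 * real n + 1) * c)
        + ((-1)^n * (2 * real n^2 + 4 * real n + 1) / (2 * (2 * real n + 3) * c)
           - (2 * real n + 1) / ((2 * real n + 2) * (2 * real n + 3))
           - (4 * real n + 3) * (-1 / (2 * real n + 2) + (-1)^n / (2 * c)))
          / ((2 * real n + 1) * (2 * real n + 2))
        - (-1)^n / ((real n + 1) * (2 * (2 * real n + 1) / (real n + 1) * c))"
    by (simp add: alternating_binomial_sum_Suc Suc.IH alternating_binomial_sum_id
        alternating_binomial_sum_const central_binomial_Suc c_def[symmetric] del: mult_Suc_right)
  also have "\<dots> = -1 / (2 * real n + 3) - (-1)^n / ((2 * real n + 3) * (2 * (2 * real n + 1) / (real n + 1) * c))"
  proof -
    have "-1 / u + s / (u * c)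
        + (s * (2 * N^2 + 4 * N + 1) / (2 * w * c) - u / (v * w) - (4 * N + 3) * (-1 / v + s / (2 * c)))
          / (u * v)
        - s / (M * (2 * u / M * c))
        = -1 / w - s / (w * (2 * u / M * c))"
      if "u = 2 * N + 1" "v = 2 * N + 2" "w = 2 * N + 3" "M = N + 1"
        "u \<noteq> 0" "v \<noteq> 0" "w \<noteq> 0" "M \<noteq> 0" "c \<noteq> 0"
      for u v w M N s c :: real
      using that(5-) by (simp add: field_simps) (simp add: that(1-4) algebra_simps power2_eq_square)
    then show ?thesis by (rule; use \<open>c > 0\<close> in simp)
  qed
  finally show ?case by (simp add: central_binomial_Suc c_def add_ac del: mult_Suc_right)
qed

lemma H2_double_Suc:
  "H2 (2 * Suc n) = H2 (2 * n) + 1 / (2 * real n + 1)^2 + 1 / (2 * real n + 2)^2"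
proof -
  have "2 * Suc n = Suc (Suc (2 * n))" by simp
  then show ?thesis unfolding H2_def by (simp add: add_ac)
qed

lemma alternating_binomial_sum_inverse_square_Suc:
  "alternating_binomial_sum (\<lambda>x. 1 / x^2) (Suc n)
    = alternating_binomial_sum (\<lambda>x. 1 / x^2) n + 1 / (2 * real n + 1)^2 + 1 / (2 * real n + 2)^2
      + 3/2 * ((-1)^Suc n / ((real n + 1)^2 * real ((2 * Suc n) choose Suc n)))
      - 2 * ((-1)^Suc n / ((real n + 1) * real ((2 * Suc n) choose Suc n)))
      + 4 * ((-1)^Suc n / ((2 * real n + 1) * real ((2 * Suc n) choose Suc n)))"
proof -
  define c where "c = real ((2 * n) choose n)"
  have "c > 0" by (simp add: c_def)
  have "alternating_binomial_sum (\<lambda>x. x^2 * (1 / x^2)) n = alternating_binomial_sum (\<lambda>_. 1) n"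
    by (rule alternating_binomial_sum_cong) simp
  moreover have "alternating_binomial_sum (\<lambda>x. x * (1 / x^2)) n = alternating_binomial_sum (\<lambda>x. 1 / x) n"
    by (rule alternating_binomial_sum_cong) (simp add: power2_eq_square)
  ultimately have "alternating_binomial_sum (\<lambda>x. 1 / x^2) (Suc n)
      = alternating_binomial_sum (\<lambda>x. 1 / x^2) n
        + ((-1 / (2 * real n + 2) + (-1)^n / (2 * c))
           - (4 * real n + 3) * (-1 / (2 * real n + 1) + (-1)^n / ((2 * real n + 1) * c)))
          / ((2 * real n + 1) * (2 * real n + 2))
        - (-1)^n / ((real n + 1)^2 * (2 * (2 * real n + 1) / (real n + 1) * c))"
    by (simp add: alternating_binomial_sum_Suc alternating_binomial_sum_inverse
        alternating_binomial_sum_const central_binomial_Suc c_def[symmetric] del: mult_Suc_right)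
  also have "\<dots> = alternating_binomial_sum (\<lambda>x. 1 / x^2) n + 1 / (2 * real n + 1)^2 + 1 / (2 * real n + 2)^2
      - 3/2 * ((-1)^n / ((real n + 1)^2 * (2 * (2 * real n + 1) / (real n + 1) * c)))
      + 2 * ((-1)^n / ((real n + 1) * (2 * (2 * real n + 1) / (real n + 1) * c)))
      - 4 * ((-1)^n / ((2 * real n + 1) * (2 * (2 * real n + 1) / (real n + 1) * c)))"
  proof -
    have "S + ((-1 / v + s / (2 * c)) - (4 * N + 3) * (-1 / u + s / (u * c))) / (u * v)
        - s / (M^2 * (2 * u / M * c))
        = S + 1 / u^2 + 1 / v^2
          - 3/2 * (s / (M^2 * (2 * u / M * c)))
          + 2 * (s / (M * (2 * u / M * c)))
          - 4 * (s / (u * (2 * u / M * c)))"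
      if "u = 2 * N + 1" "v = 2 * N + 2" "M = N + 1" "u \<noteq> 0" "v \<noteq> 0" "M \<noteq> 0" "c \<noteq> 0"
      for S u v M N s c :: real
      using that(4-) by (simp add: field_simps)
        (simp add: that(1-3) algebra_simps power2_eq_square power3_eq_cube power4_eq_xxxx)
    then show ?thesis by (rule; use \<open>c > 0\<close> in simp)
  qed
  finally show ?thesis by (simp add: central_binomial_Suc c_def del: mult_Suc_right)
qed

lemma alternating_binomial_sum_inverse_square:
  "alternating_binomial_sum (\<lambda>x. 1 / x^2) n
    = H2 (2 * n)
      + 3/2 * (\<Sum>k=1..n. (-1)^k / ((real k)^2 * real ((2 * k) choose k)))
      - 2 * (\<Sum>k=1..n. (-1)^k / (real k * real ((2 * k) choose k)))
      + 4 * (\<Sum>k=1..n. (-1)^k / ((2 * real k - 1) * real ((2 * k) choose k)))"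
proof (induction n)
  case 0
  show ?case by (simp add: alternating_binomial_sum_def H2_def)
next
  case (Suc n)
  show ?case
    unfolding alternating_binomial_sum_inverse_square_Suc Suc.IH H2_double_Suc
    by (simp add: algebra_simps del: mult_Suc_right)
qed

theorem mainTheorem12:
  fixes n :: nat
  assumes "n \<ge> 1"
  shows "(\<Sum>k=1..n. (-1)^k / ((real k)^2 * real ((2*n) choose k)))
    = H2 (2*n)
      + 3/2 * (\<Sum>k=1..n. (-1)^k / ((real k)^2 * real ((2*k) choose k)))
      - 2 * (\<Sum>k=1..n. (-1)^k / (real k * real ((2*k) choose k)))
      + 4 * (\<Sum>k=1..n. (-1)^k / ((2 * real k - 1) * real ((2*k) choose k)))"
proof -
  have "(\<Sum>k=1..n. (-1)^k / ((real k)^2 * real ((2*n) choose k)))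
      = alternating_binomial_sum (\<lambda>x. 1 / x^2) n"
    unfolding alternating_binomial_sum_def by simp
  then show ?thesis unfolding alternating_binomial_sum_inverse_square .
qed

end
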